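(* Let $0<p_1<p_2\le\infty$, $q_1,q_2\in[1,\infty]$ with $\min\{p_2,q_2\}<\infty$. Then the embedding operator $I\colon\ell^{p_1,q_1}\to\ell^{p_2,q_2}$ is maximally non-compact, i.e. $\alpha(I)=\|I\|$.
   Context: For a scalar sequence $a=(a_n)$, its decreasing rearrangement is $a^*_n=\inf\{\omega>0:\#\{k:|a_k|>\omega\}\le n-1\}$. For $p,q\in(0,\infty]$, the Lorentz sequence space $\ell^{p,q}$ consists of all sequences $a$ with $\|a\|_{p,q}<\infty$, where $\|a\|_{p,q}=\big(\sum_{n=1}^\infty (a_n^* )^q n^{q/p-1}\big)^{1/q}$ if $q<\infty$, and $\|a\|_{p,\infty}=\sup_{n}n^{1/p}a_n^*$; convention $1/\infty=0$. For a bounded map $T\colon X\to Y$ with closed unit balls $B_X,B_Y$, the ball measure of non-compactness is $\alpha(T)=\inf\{r>0:\ T(B_X)\subset\bigcup_{i=1}^m (y_i+rB_Y)\text{ for some } m\in\mathbb{N},\ y_i\in Y\}$, $\|T\|=\sup_{x\in B_X}\|Tx\|$, and $T$ is maximally non-compact if $\alpha(T)=\|T\|$. *)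

theory Defs
  imports "HOL-Analysis.Analysis"
begin

definition inv_exp :: "ereal \<Rightarrow> real" where
  "inv_exp p = (if p = \<infinity> then 0 else 1 / real_of_ereal p)"

text \<open>Decreasing rearrangement, for n \<ge> 1 (only meaningful for bounded sequences;
  unbounded sequences get Lorentz norm infinity below, corresponding to a*_1 = infinity).\<close>
definition dec_rearr :: "(nat \<Rightarrow> real) \<Rightarrow> nat \<Rightarrow> real" where
  "dec_rearr a n = Inf {\<omega>::real. \<omega> > 0 \<and> finite {k. \<bar>a k\<bar> > \<omega>} \<and>
                                  card {k. \<bar>a k\<bar> > \<omega>} \<le> n - 1}"

definition lorentz_norm :: "ereal \<Rightarrow> ereal \<Rightarrow> (nat \<Rightarrow> real) \<Rightarrow> ennreal" where
  "lorentz_norm p q a =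
     (if \<not> bdd_above (range (\<lambda>k. \<bar>a k\<bar>)) then \<infinity>
      else if q = \<infinity> then
        (SUP n\<in>{1..}. ennreal (real n powr inv_exp p * dec_rearr a n))
      else
        (let qr = real_of_ereal q;
             s = (\<Sum>n. ennreal (dec_rearr a (Suc n) powr qr *
                                   real (Suc n) powr (qr * inv_exp p - 1)))
         in if s = \<infinity> then \<infinity> else ennreal (enn2real s powr (1 / qr))))"

definition lorentz_space :: "ereal \<Rightarrow> ereal \<Rightarrow> (nat \<Rightarrow> real) set" where
  "lorentz_space p q = {a. lorentz_norm p q a < \<infinity>}"

definition lorentz_ball :: "ereal \<Rightarrow> ereal \<Rightarrow> (nat \<Rightarrow> real) set" where
  "lorentz_ball p q = {a. lorentz_norm p q a \<le> 1}"

definition emb_norm :: "ereal \<Rightarrow> ereal \<Rightarrow> ereal \<Rightarrow> ereal \<Rightarrow> ennreal" where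
  "emb_norm p1 q1 p2 q2 = (SUP a\<in>lorentz_ball p1 q1. lorentz_norm p2 q2 a)"

definition emb_alpha :: "ereal \<Rightarrow> ereal \<Rightarrow> ereal \<Rightarrow> ereal \<Rightarrow> ennreal" where
  "emb_alpha p1 q1 p2 q2 = Inf {ennreal r | r. r > 0 \<and>
      (\<exists>F. finite F \<and> F \<noteq> {} \<and> F \<subseteq> lorentz_space p2 q2 \<and>
         lorentz_ball p1 q1 \<subseteq> (\<Union>y\<in>F. {x. lorentz_norm p2 q2 (x - y) \<le> ennreal r}))}"

end

theory Submission
  imports Defs "HOL-Real_Asymp.Real_Asymp"
begin

text \<open>The Lorentz norm depends only on the decreasing rearrangement, so it is invariant under
  shifting a sequence to the right. Given a finite cover of the unit ball of \<open>\<ell>\<^bsup>p\<^sub>1,q\<^sub>1\<^esup>\<close> by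
  \<open>\<ell>\<^bsup>p\<^sub>2,q\<^sub>2\<^esup>\<close>-balls of radius \<open>r\<close>, and \<open>x\<close> in the unit ball, shift \<open>x\<close> so far that all centres
  are uniformly below \<open>\<epsilon>\<close> there (they tend to \<open>0\<close> because \<open>min p\<^sub>2 q\<^sub>2 < \<infinity>\<close>). The shifted
  \<open>x\<close> minus its centre then has rearrangement at least \<open>x\<^sup>* - \<epsilon>\<close>, and lower semicontinuity of
  the norm under such perturbations gives \<open>\<parallel>x\<parallel> \<le> r\<close>. Hence \<open>\<parallel>I\<parallel> \<le> \<alpha>(I)\<close>; the reverse
  inequality is the cover by a single ball around \<open>0\<close>.\<close>

abbreviation bdd_seq :: "(nat \<Rightarrow> real) \<Rightarrow> bool" where
  "bdd_seq a \<equiv> bdd_above (range (\<lambda>k. \<bar>a k\<bar>))"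

lemma dec_rearr_greatest:
  assumes "bdd_seq a"
    and "\<And>\<omega>. 0 < \<omega> \<Longrightarrow> finite {k. \<omega> < \<bar>a k\<bar>} \<Longrightarrow> card {k. \<omega> < \<bar>a k\<bar>} \<le> n - 1 \<Longrightarrow> c \<le> \<omega>"
  shows "c \<le> dec_rearr a n"
proof -
  obtain B where "\<And>k. \<bar>a k\<bar> \<le> B"
    using assms(1) by (auto simp: bdd_above_def)
  then have "{k. max B 0 + 1 < \<bar>a k\<bar>} = {}"
    by (smt (verit, best) empty_Collect_eq)
  then have "\<exists>\<omega>>0. finite {k. \<omega> < \<bar>a k\<bar>} \<and> card {k. \<omega> < \<bar>a k\<bar>} \<le> n - 1"
    by (intro exI[of _ "max B 0 + 1"]) auto
  then show ?thesis
    unfolding dec_rearr_def using assms(2) by (intro cInf_greatest) auto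
qed

lemma dec_rearr_le:
  assumes "0 < \<omega>" "finite {k. \<omega> < \<bar>a k\<bar>}" "card {k. \<omega> < \<bar>a k\<bar>} \<le> n - 1"
  shows "dec_rearr a n \<le> \<omega>"
  unfolding dec_rearr_def using assms by (intro cInf_lower bdd_belowI[of _ 0]) auto

lemma dec_rearr_nonneg: "bdd_seq a \<Longrightarrow> 0 \<le> dec_rearr a n"
  by (rule dec_rearr_greatest) auto

lemma dec_rearr_ge_if_infinite_level_set:
  assumes "bdd_seq a" "infinite {k. e < \<bar>a k\<bar>}"
  shows "e \<le> dec_rearr a n"
proof (rule dec_rearr_greatest[OF assms(1)])
  fix \<omega> assume finite: "finite {k. \<omega> < \<bar>a k\<bar>}"
  show "e \<le> \<omega>"
  proof (rule ccontr)
    assume "\<not> e \<le> \<omega>"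
    then have "{k. e < \<bar>a k\<bar>} \<subseteq> {k. \<omega> < \<bar>a k\<bar>}"
      by auto
    then show False
      using finite assms(2) finite_subset by blast
  qed
qed

lemma dec_rearr_diff_le_inj:
  assumes "inj f" "bdd_seq b" "0 \<le> \<epsilon>" "\<And>j. \<bar>a j\<bar> \<le> \<bar>b (f j)\<bar> + \<epsilon>"
  shows "dec_rearr a n - \<epsilon> \<le> dec_rearr b n"
proof (rule dec_rearr_greatest[OF assms(2)])
  fix \<omega> :: real
  assume \<omega>: "0 < \<omega>" "finite {k. \<omega> < \<bar>b k\<bar>}" "card {k. \<omega> < \<bar>b k\<bar>} \<le> n - 1"
  have sub: "f ` {j. \<omega> + \<epsilon> < \<bar>a j\<bar>} \<subseteq> {k. \<omega> < \<bar>b k\<bar>}"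
    using assms(4) by (smt (verit) image_subset_iff mem_Collect_eq)
  have inj: "inj_on f {j. \<omega> + \<epsilon> < \<bar>a j\<bar>}"
    using assms(1) by (rule inj_on_subset) simp
  have "finite {j. \<omega> + \<epsilon> < \<bar>a j\<bar>}"
    using finite_subset[OF sub \<omega>(2)] finite_image_iff[OF inj] by simp
  moreover have "card {j. \<omega> + \<epsilon> < \<bar>a j\<bar>} \<le> card {k. \<omega> < \<bar>b k\<bar>}"
    by (rule card_inj_on_le[OF inj sub \<omega>(2)])
  ultimately have "dec_rearr a n \<le> \<omega> + \<epsilon>"
    using \<omega> assms(3) by (intro dec_rearr_le) auto
  then show "dec_rearr a n - \<epsilon> \<le> \<omega>" by simp
qed

definition shift_seq :: "nat \<Rightarrow> (nat \<Rightarrow> real) \<Rightarrow> nat \<Rightarrow> real" where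
  "shift_seq N x k = (if k < N then 0 else x (k - N))"

lemma bdd_seq_shift_seq_iff: "bdd_seq (shift_seq N x) \<longleftrightarrow> bdd_seq x"
proof
  assume "bdd_seq (shift_seq N x)"
  then obtain B where "\<And>k. \<bar>shift_seq N x k\<bar> \<le> B"
    by (auto simp: bdd_above_def)
  then have "\<bar>x j\<bar> \<le> B" for j
    by (metis add_diff_cancel_right' not_add_less2 shift_seq_def)
  then show "bdd_seq x" by (auto intro!: bdd_aboveI)
next
  assume "bdd_seq x"
  then obtain B where "\<And>k. \<bar>x k\<bar> \<le> B"
    by (auto simp: bdd_above_def)
  then have "\<bar>shift_seq N x j\<bar> \<le> B" for j
    by (smt (verit) shift_seq_def)
  then show "bdd_seq (shift_seq N x)" by (auto intro!: bdd_aboveI)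
qed

lemma dec_rearr_shift_seq: "dec_rearr (shift_seq N x) n = dec_rearr x n"
proof -
  have level: "{k. \<omega> < \<bar>shift_seq N x k\<bar>} = (\<lambda>j. j + N) ` {j. \<omega> < \<bar>x j\<bar>}" if "0 < \<omega>" for \<omega>
    using that by (auto simp: shift_seq_def image_iff intro!: exI[of _ "_ - N"])
  have "finite {k. \<omega> < \<bar>shift_seq N x k\<bar>} = finite {k. \<omega> < \<bar>x k\<bar>}"
    "card {k. \<omega> < \<bar>shift_seq N x k\<bar>} = card {k. \<omega> < \<bar>x k\<bar>}" if "0 < \<omega>" for \<omega>
    unfolding level[OF that] by (simp_all add: finite_image_iff card_image)
  then show ?thesis
    unfolding dec_rearr_def by (intro arg_cong[where f = Inf]) auto
qed

lemma lorentz_norm_shift_seq: "lorentz_norm p q (shift_seq N x) = lorentz_norm p q x"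
  unfolding lorentz_norm_def dec_rearr_shift_seq bdd_seq_shift_seq_iff ..

lemma bdd_seq_if_lorentz_norm_finite: "lorentz_norm p q a < \<infinity> \<Longrightarrow> bdd_seq a"
  unfolding lorentz_norm_def by (cases "bdd_seq a") auto

lemma lorentz_norm_weak:
  "bdd_seq a \<Longrightarrow> lorentz_norm p \<infinity> a = (SUP n\<in>{1..}. ennreal (real n powr inv_exp p * dec_rearr a n))"
  unfolding lorentz_norm_def by simp

definition lorentz_sum :: "ereal \<Rightarrow> real \<Rightarrow> (nat \<Rightarrow> real) \<Rightarrow> ennreal" where
  "lorentz_sum p q a =
     (\<Sum>n. ennreal (dec_rearr a (Suc n) powr q * real (Suc n) powr (q * inv_exp p - 1)))"

lemma lorentz_norm_strong:
  "bdd_seq a \<Longrightarrow> q \<noteq> \<infinity> \<Longrightarrow> lorentz_norm p q a =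
     (if lorentz_sum p (real_of_ereal q) a = \<infinity> then \<infinity>
      else ennreal (enn2real (lorentz_sum p (real_of_ereal q) a) powr (1 / real_of_ereal q)))"
  unfolding lorentz_norm_def lorentz_sum_def by (simp add: Let_def)

lemma less_powr_inverse_iff:
  fixes r s q :: real
  assumes "0 < q" "0 \<le> r" "0 \<le> s"
  shows "r < s powr (1 / q) \<longleftrightarrow> r powr q < s"
proof -
  have s: "(s powr (1 / q)) powr q = s"
    using assms by (simp add: powr_powr)
  show ?thesis
  proof
    assume "r < s powr (1 / q)"
    then show "r powr q < s"
      using powr_less_mono2[OF assms(1,2)] s by metis
  next
    assume "r powr q < s"
    then show "r < s powr (1 / q)"
      using powr_mono2[of q "s powr (1 / q)" r] assms s by fastforce
  qed
qed

lemma ennreal_less_lorentz_norm_iff: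
  assumes "bdd_seq a" "0 < q" "q \<noteq> \<infinity>" "0 \<le> r"
  shows "ennreal r < lorentz_norm p q a \<longleftrightarrow>
    ennreal (r powr real_of_ereal q) < lorentz_sum p (real_of_ereal q) a"
proof (cases "lorentz_sum p (real_of_ereal q) a = \<infinity>")
  case True
  then show ?thesis
    using assms by (simp add: lorentz_norm_strong)
next
  case False
  define qr where "qr = real_of_ereal q"
  define s where "s = enn2real (lorentz_sum p qr a)"
  have qr: "0 < qr"
    using assms(2,3) unfolding qr_def by (cases q) auto
  have s: "0 \<le> s" "lorentz_sum p qr a = ennreal s"
    using False unfolding s_def qr_def by (auto simp: ennreal_enn2real_if)
  have "r < s powr (1 / qr) \<longleftrightarrow> r powr qr < s"
    using qr s(1) assms(4) by (intro less_powr_inverse_iff) auto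
  then show ?thesis
    using False assms s qr by (simp add: lorentz_norm_strong ennreal_less_iff flip: qr_def)
qed

lemma inv_exp_nonneg: "0 < p \<Longrightarrow> 0 \<le> inv_exp p"
  by (cases p) (auto simp: inv_exp_def)

lemma inv_exp_pos: "0 < p \<Longrightarrow> p \<noteq> \<infinity> \<Longrightarrow> 0 < inv_exp p"
  by (cases p) (auto simp: inv_exp_def)

lemma real_of_ereal_pos: "0 < q \<Longrightarrow> q \<noteq> \<infinity> \<Longrightarrow> 0 < real_of_ereal q"
  by (cases q) auto

lemma lorentz_norm_weak_eq_top_if_dec_rearr_ge:
  assumes "bdd_seq a" "0 < p" "p \<noteq> \<infinity>" "0 < e" "\<And>n. e \<le> dec_rearr a n"
  shows "lorentz_norm p \<infinity> a = \<infinity>"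
proof -
  have "filterlim (\<lambda>n. e * real n powr inv_exp p) at_top sequentially"
    using inv_exp_pos[OF assms(2,3)] assms(4)
    by (intro filterlim_tendsto_pos_mult_at_top[OF tendsto_const]
        filterlim_compose[OF real_powr_at_top filterlim_real_sequentially])
  then have "\<exists>n\<in>{1..}. of_nat m \<le> ennreal (real n powr inv_exp p * dec_rearr a n)" for m
  proof -
    assume "filterlim (\<lambda>n. e * real n powr inv_exp p) at_top sequentially"
    then obtain n where n: "1 \<le> n" "real m \<le> e * real n powr inv_exp p"
      unfolding filterlim_at_top eventually_sequentially by (metis nle_le)
    have "e * real n powr inv_exp p \<le> real n powr inv_exp p * dec_rearr a n"
      using assms(5)[of n] by (simp add: mult.commute[of e] mult_left_mono)
    then have "real m \<le> real n powr inv_exp p * dec_rearr a n"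
      using n(2) by linarith
    then show ?thesis
      using n(1) by (intro bexI[of _ n]) (auto simp: ennreal_of_nat_eq_real_of_nat intro: ennreal_leI)
  qed
  then show ?thesis
    unfolding lorentz_norm_weak[OF assms(1)] infinity_ennreal_def by (rule ennreal_SUP_eq_top)
qed

lemma lorentz_norm_strong_eq_top_if_dec_rearr_ge:
  assumes "bdd_seq a" "0 < p" "0 < q" "q \<noteq> \<infinity>" "0 < e" "\<And>n. e \<le> dec_rearr a n"
  shows "lorentz_norm p q a = \<infinity>"
proof -
  define qr where "qr = real_of_ereal q"
  have qr: "0 < qr"
    unfolding qr_def using assms(3,4) by (rule real_of_ereal_pos)
  have not_summable: "\<not> summable (\<lambda>n. e powr qr * inverse (real (Suc n)))"
  proof
    assume "summable (\<lambda>n. e powr qr * inverse (real (Suc n)))"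
    then have "summable (\<lambda>n. inverse (e powr qr) * (e powr qr * inverse (real (Suc n))))"
      by (rule summable_mult)
    then have "summable (\<lambda>n. inverse (real (Suc n)))"
      using assms(5) by simp
    then show False
      using not_summable_harmonic[where 'a = real] summable_Suc_iff by blast
  qed
  have "(\<Sum>n. ennreal (e powr qr * inverse (real (Suc n)))) = top"
    using assms(5) by (intro summable_iff_suminf_neq_top[OF _ not_summable]) auto
  moreover have "(\<Sum>n. ennreal (e powr qr * inverse (real (Suc n)))) \<le> lorentz_sum p qr a"
    unfolding lorentz_sum_def
  proof (intro suminf_le summableI ennreal_leI mult_mono)
    fix n
    show "e powr qr \<le> dec_rearr a (Suc n) powr qr"
      using assms(5,6) qr by (intro powr_mono2) auto
    have "inverse (real (Suc n)) = real (Suc n) powr (-1)"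
      by (simp add: powr_neg_one divide_inverse)
    also have "\<dots> \<le> real (Suc n) powr (qr * inv_exp p - 1)"
      using qr inv_exp_nonneg[OF assms(2)] by (intro powr_mono) auto
    finally show "inverse (real (Suc n)) \<le> real (Suc n) powr (qr * inv_exp p - 1)" .
  qed (use assms(5) in auto)
  ultimately show ?thesis
    using assms(1,4) by (simp add: lorentz_norm_strong top_unique flip: qr_def)
qed

lemma finite_level_set_if_lorentz_norm_finite:
  assumes "lorentz_norm p q y < \<infinity>" "0 < p" "0 < q" "min p q < \<infinity>" "0 < e"
  shows "finite {k. e < \<bar>y k\<bar>}"
proof (rule ccontr)
  assume "infinite {k. e < \<bar>y k\<bar>}"
  moreover have bdd: "bdd_seq y"
    using assms(1) by (rule bdd_seq_if_lorentz_norm_finite)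
  ultimately have "\<And>n. e \<le> dec_rearr y n"
    by (rule dec_rearr_ge_if_infinite_level_set[rotated])
  then have "lorentz_norm p q y = \<infinity>"
    using lorentz_norm_weak_eq_top_if_dec_rearr_ge[OF bdd assms(2) _ assms(5)]
      lorentz_norm_strong_eq_top_if_dec_rearr_ge[OF bdd assms(2,3) _ assms(5)] assms(4)
    by (cases "q = \<infinity>") auto
  then show False
    using assms(1) by simp
qed

lemma uniformly_small_tails:
  assumes "finite F" "F \<subseteq> lorentz_space p q" "0 < p" "0 < q" "min p q < \<infinity>" "0 < e"
  obtains N where "\<And>y k. y \<in> F \<Longrightarrow> N \<le> k \<Longrightarrow> \<bar>y k\<bar> \<le> e"
proof -
  have "finite {k. e < \<bar>y k\<bar>}" if "y \<in> F" for y
    using that assms(2) unfolding lorentz_space_def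
    by (blast intro: finite_level_set_if_lorentz_norm_finite[OF _ assms(3-6)])
  then have "finite (\<Union>y\<in>F. {k. e < \<bar>y k\<bar>})"
    using assms(1) by (intro finite_UN_I)
  then obtain N where N: "(\<Union>y\<in>F. {k. e < \<bar>y k\<bar>}) \<subseteq> {..<N}"
    using finite_nat_bounded by blast
  show ?thesis
  proof (rule that, rule ccontr)
    fix y k assume "y \<in> F" "N \<le> k" "\<not> \<bar>y k\<bar> \<le> e"
    then have "k \<in> (\<Union>y\<in>F. {k. e < \<bar>y k\<bar>})"
      by (auto simp: not_le)
    then show False
      using N \<open>N \<le> k\<close> by auto
  qed
qed

lemma lorentz_norm_weak_gt_stable:
  assumes "bdd_seq a" "ennreal r < lorentz_norm p \<infinity> a" "0 \<le> r"
  obtains \<epsilon> where "0 < \<epsilon>"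
    "\<And>b. bdd_seq b \<Longrightarrow> (\<And>n. dec_rearr a n - \<epsilon> \<le> dec_rearr b n) \<Longrightarrow>
      ennreal r < lorentz_norm p \<infinity> b"
proof -
  obtain n where n: "n \<in> {1..}" "ennreal r < ennreal (real n powr inv_exp p * dec_rearr a n)"
    using assms(2) unfolding lorentz_norm_weak[OF assms(1)] less_SUP_iff by blast
  define c where "c = real n powr inv_exp p"
  have c: "0 < c"
    using n(1) unfolding c_def by simp
  have "r < c * dec_rearr a n"
    using n(2) assms(3) unfolding c_def by (simp add: ennreal_less_iff)
  define d where "d = r / c"
  have d: "d < dec_rearr a n"
    using \<open>r < c * dec_rearr a n\<close> c unfolding d_def by (simp add: pos_divide_less_eq mult.commute)
  define \<epsilon> where "\<epsilon> = (dec_rearr a n - d) / 2"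
  show ?thesis
  proof (rule that)
    show "0 < \<epsilon>"
      using d unfolding \<epsilon>_def by simp
    fix b assume b: "bdd_seq b" "\<And>n. dec_rearr a n - \<epsilon> \<le> dec_rearr b n"
    have "d < dec_rearr b n"
      using d b(2)[of n] unfolding \<epsilon>_def by (simp add: field_simps)
    then have "r < c * dec_rearr b n"
      using c unfolding d_def by (simp add: pos_divide_less_eq mult.commute)
    then have "ennreal r < ennreal (real n powr inv_exp p * dec_rearr b n)"
      using assms(3) unfolding c_def by (simp add: ennreal_less_iff)
    then show "ennreal r < lorentz_norm p \<infinity> b"
      unfolding lorentz_norm_weak[OF b(1)] less_SUP_iff using n(1) by blast
  qed
qed

text \<open>A finite partial sum already exceeds \<open>t\<close>, and it depends continuously on a uniform
  lowering of the rearrangement.\<close>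

lemma lorentz_sum_gt_stable:
  assumes "bdd_seq a" "t < lorentz_sum p q a" "0 < q"
  obtains \<epsilon> where "0 < \<epsilon>"
    "\<And>b. bdd_seq b \<Longrightarrow> (\<And>n. dec_rearr a n - \<epsilon> \<le> dec_rearr b n) \<Longrightarrow> t < lorentz_sum p q b"
proof -
  define c where "c n = real (Suc n) powr (q * inv_exp p - 1)" for n
  have c: "0 \<le> c n" for n
    unfolding c_def by simp
  obtain M where M: "t < (\<Sum>n<M. ennreal (dec_rearr a (Suc n) powr q * c n))"
    using assms(2) unfolding lorentz_sum_def suminf_eq_SUP less_SUP_iff c_def by blast
  define T where "T e = (\<Sum>n<M. max (dec_rearr a (Suc n) - e) 0 powr q * c n)" for e
  have "T 0 = (\<Sum>n<M. dec_rearr a (Suc n) powr q * c n)"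
    unfolding T_def using dec_rearr_nonneg[OF assms(1)] by (simp add: max_absorb1)
  also have "ennreal \<dots> = (\<Sum>n<M. ennreal (dec_rearr a (Suc n) powr q * c n))"
    using c by (intro sum_ennreal[symmetric]) simp
  finally have "t < ennreal (T 0)"
    using M by simp
  then obtain t' where t': "t = ennreal t'" "0 \<le> t'" "t' < T 0"
    by (cases t) (auto simp: ennreal_less_iff)
  have "(T \<longlongrightarrow> T 0) (at_right 0)"
    unfolding T_def using assms(3)
    by (intro tendsto_intros tendsto_powr') (auto intro!: always_eventually)
  then have "\<forall>\<^sub>F e in at_right 0. t' < T e"
    using t'(3) by (rule order_tendstoD)
  moreover have "\<forall>\<^sub>F e in at_right 0. (0::real) < e"
    by (simp add: eventually_at_right_less)
  ultimately have "\<forall>\<^sub>F e in at_right 0. 0 < e \<and> t' < T e"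
    by eventually_elim simp
  then obtain \<epsilon> where \<epsilon>: "0 < \<epsilon>" "t' < T \<epsilon>"
    using eventually_happens' trivial_limit_at_right_real by blast
  show ?thesis
  proof (rule that[OF \<epsilon>(1)])
    fix b assume b: "bdd_seq b" "\<And>n. dec_rearr a n - \<epsilon> \<le> dec_rearr b n"
    have "t < ennreal (T \<epsilon>)"
      using t' \<epsilon>(2) by (simp add: ennreal_less_iff)
    also have "\<dots> = (\<Sum>n<M. ennreal (max (dec_rearr a (Suc n) - \<epsilon>) 0 powr q * c n))"
      unfolding T_def using c by (intro sum_ennreal[symmetric]) simp
    also have "\<dots> \<le> (\<Sum>n<M. ennreal (dec_rearr b (Suc n) powr q * c n))"
      using b dec_rearr_nonneg[OF b(1)] assms(3) c
      by (intro sum_mono ennreal_leI mult_right_mono powr_mono2) auto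
    also have "\<dots> \<le> lorentz_sum p q b"
      unfolding lorentz_sum_def c_def by (rule sum_le_suminf) auto
    finally show "t < lorentz_sum p q b" .
  qed
qed

lemma lorentz_norm_gt_stable:
  assumes "bdd_seq a" "ennreal r < lorentz_norm p q a" "0 \<le> r" "0 < q"
  obtains \<epsilon> where "0 < \<epsilon>"
    "\<And>b. bdd_seq b \<Longrightarrow> (\<And>n. dec_rearr a n - \<epsilon> \<le> dec_rearr b n) \<Longrightarrow>
      ennreal r < lorentz_norm p q b"
proof (cases "q = \<infinity>")
  case True
  then show ?thesis
    using lorentz_norm_weak_gt_stable assms that by blast
next
  case False
  have qr: "0 < real_of_ereal q"
    using assms(4) False by (rule real_of_ereal_pos)
  show ?thesis
    using lorentz_sum_gt_stable[OF assms(1) _ qr] that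
      ennreal_less_lorentz_norm_iff[OF _ assms(4) False assms(3)] assms(1,2) by metis
qed

lemma lorentz_norm_le_if_shifts_covered:
  assumes "bdd_seq x" "0 < p" "0 < q" "min p q < \<infinity>" "0 \<le> r"
    and "finite F" "F \<subseteq> lorentz_space p q"
    and cover: "\<And>N. \<exists>y\<in>F. lorentz_norm p q (shift_seq N x - y) \<le> ennreal r"
  shows "lorentz_norm p q x \<le> ennreal r"
proof (rule ccontr)
  assume "\<not> lorentz_norm p q x \<le> ennreal r"
  then have "ennreal r < lorentz_norm p q x"
    by simp
  then obtain \<epsilon> where \<epsilon>: "0 < \<epsilon>" and stable: "\<And>b. bdd_seq b \<Longrightarrow>
      (\<And>n. dec_rearr x n - \<epsilon> \<le> dec_rearr b n) \<Longrightarrow> ennreal r < lorentz_norm p q b"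
    by (rule lorentz_norm_gt_stable[OF assms(1) _ assms(5,3)]) blast
  obtain N where N: "\<And>y k. y \<in> F \<Longrightarrow> N \<le> k \<Longrightarrow> \<bar>y k\<bar> \<le> \<epsilon>"
    using uniformly_small_tails[OF assms(6,7,2-4) \<epsilon>] by blast
  obtain y where y: "y \<in> F" "lorentz_norm p q (shift_seq N x - y) \<le> ennreal r"
    using cover by blast
  have "lorentz_norm p q (shift_seq N x - y) < \<infinity>"
    using y(2) by (metis ennreal_less_top infinity_ennreal_def le_less_trans)
  then have bdd: "bdd_seq (shift_seq N x - y)"
    by (rule bdd_seq_if_lorentz_norm_finite)
  have "\<bar>x j\<bar> \<le> \<bar>(shift_seq N x - y) (j + N)\<bar> + \<epsilon>" for j
    using N[OF y(1), of "j + N"] by (simp add: shift_seq_def)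
  then have "dec_rearr x n - \<epsilon> \<le> dec_rearr (shift_seq N x - y) n" for n
    using \<epsilon> by (intro dec_rearr_diff_le_inj[where f = "\<lambda>j. j + N", OF _ bdd]) (auto simp: inj_def)
  then have "ennreal r < lorentz_norm p q (shift_seq N x - y)"
    by (rule stable[OF bdd])
  then show False
    using y(2) by simp
qed

definition ball_cover_radius :: "ereal \<Rightarrow> ereal \<Rightarrow> ereal \<Rightarrow> ereal \<Rightarrow> real \<Rightarrow> bool" where
  "ball_cover_radius p1 q1 p2 q2 r \<longleftrightarrow> 0 < r \<and>
     (\<exists>F. finite F \<and> F \<noteq> {} \<and> F \<subseteq> lorentz_space p2 q2 \<and>
        lorentz_ball p1 q1 \<subseteq> (\<Union>y\<in>F. {x. lorentz_norm p2 q2 (x - y) \<le> ennreal r}))"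

lemma emb_alpha_eq_Inf_ball_cover_radius:
  "emb_alpha p1 q1 p2 q2 = Inf {ennreal r | r. ball_cover_radius p1 q1 p2 q2 r}"
  unfolding emb_alpha_def ball_cover_radius_def ..

lemma emb_norm_le_emb_alpha:
  assumes "0 < p2" "0 < q2" "min p2 q2 < \<infinity>"
  shows "emb_norm p1 q1 p2 q2 \<le> emb_alpha p1 q1 p2 q2"
  unfolding emb_alpha_eq_Inf_ball_cover_radius emb_norm_def
proof (intro Inf_greatest SUP_least)
  fix z x
  assume "z \<in> {ennreal r | r. ball_cover_radius p1 q1 p2 q2 r}"
  then obtain r F where r: "z = ennreal r" "0 < r" "finite F" "F \<subseteq> lorentz_space p2 q2"
      and F: "lorentz_ball p1 q1 \<subseteq> (\<Union>y\<in>F. {x. lorentz_norm p2 q2 (x - y) \<le> ennreal r})"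
    unfolding ball_cover_radius_def by blast
  assume x: "x \<in> lorentz_ball p1 q1"
  then have "shift_seq N x \<in> lorentz_ball p1 q1" for N
    by (simp add: lorentz_ball_def lorentz_norm_shift_seq)
  then have "\<exists>y\<in>F. lorentz_norm p2 q2 (shift_seq N x - y) \<le> ennreal r" for N
    using F by blast
  moreover have "bdd_seq x"
    using x by (intro bdd_seq_if_lorentz_norm_finite[of p1 q1])
      (auto simp: lorentz_ball_def ennreal_one_less_top intro: le_less_trans)
  ultimately show "lorentz_norm p2 q2 x \<le> z"
    using F r assms by (intro lorentz_norm_le_if_shifts_covered[of _ p2 q2 r F, folded r(1)]) auto
qed

lemma lorentz_space_zero: "(\<lambda>_. 0) \<in> lorentz_space p q"
proof -
  have "{\<omega>::real. 0 < \<omega> \<and> finite {k::nat. \<omega> < \<bar>0\<bar>} \<and> card {k::nat. \<omega> < \<bar>0\<bar>} \<le> n - 1} = {0<..}" for n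
    by auto
  then have "dec_rearr (\<lambda>_. 0) n = 0" for n
    unfolding dec_rearr_def by simp
  then show ?thesis
    unfolding lorentz_space_def lorentz_norm_def by (simp add: Let_def)
qed

lemma emb_alpha_le_emb_norm: "emb_alpha p1 q1 p2 q2 \<le> emb_norm p1 q1 p2 q2"
  unfolding emb_alpha_eq_Inf_ball_cover_radius
proof (rule dense_ge)
  fix t assume "emb_norm p1 q1 p2 q2 < t"
  then obtain u where u: "emb_norm p1 q1 p2 q2 < u" "u < t"
    using dense by blast
  then obtain r where r: "u = ennreal r" "0 < r"
    by (cases u) (auto simp: top_unique dest: le_less_trans[OF zero_le])
  have "lorentz_norm p2 q2 x \<le> emb_norm p1 q1 p2 q2" if "x \<in> lorentz_ball p1 q1" for x
    using that unfolding emb_norm_def by (rule SUP_upper)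
  then have "lorentz_ball p1 q1 \<subseteq> (\<Union>y\<in>{\<lambda>_. 0}. {x. lorentz_norm p2 q2 (x - y) \<le> ennreal r})"
    using u(1) r(1) by (force simp: fun_diff_def)
  then have "ball_cover_radius p1 q1 p2 q2 r"
    unfolding ball_cover_radius_def using r(2) lorentz_space_zero by blast
  then have "Inf {ennreal r | r. ball_cover_radius p1 q1 p2 q2 r} \<le> ennreal r"
    by (blast intro: Inf_lower)
  then show "Inf {ennreal r | r. ball_cover_radius p1 q1 p2 q2 r} \<le> t"
    using u(2) r(1) by simp
qed

theorem mainTheorem12:
  fixes p1 p2 q1 q2 :: ereal
  assumes "0 < p1" and "p1 < p2"
    and "1 \<le> q1" and "1 \<le> q2"
    and "min p2 q2 < \<infinity>"
  shows "emb_alpha p1 q1 p2 q2 = emb_norm p1 q1 p2 q2"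
proof (rule antisym)
  show "emb_alpha p1 q1 p2 q2 \<le> emb_norm p1 q1 p2 q2"
    by (rule emb_alpha_le_emb_norm)
  have "0 < p2"
    using assms(1,2) by (rule order.strict_trans)
  moreover have "0 < q2"
    by (rule order.strict_trans2[OF _ assms(4)]) simp
  ultimately show "emb_norm p1 q1 p2 q2 \<le> emb_alpha p1 q1 p2 q2"
    using assms(5) by (rule emb_norm_le_emb_alpha)
qed

end
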